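(* For any positive integers $q,z,m,t$ with $q\geq 2$, $z<q$ and $t<m$, there exists a $\big(\binom{m}{t}q^t\lfloor\frac{q-1}{q-z}\rfloor^t,\ q^m,\ q^m-(q-z)^tq^{m-t},\ (q-z)^tq^m\big)$ placement delivery array. In particular there is a corresponding coded caching scheme with $\frac{M}{N}=1-(\frac{q-z}{q})^t$ and rate $R=(q-z)^t$.
   Context: A $(K,F,Z,S)$ placement delivery array (PDA) is an $F\times K$ array whose entries are either a special symbol $*$ or one of $S$ distinct non-star symbols (identified with $1,\ldots,S$), such that: (C1) $*$ appears exactly $Z$ times in each column; (C2) each of the $S$ symbols occurs at least once; (C3) for any two distinct entries $p_{j_1,k_1}=p_{j_2,k_2}=s$ with $s$ a non-star symbol, we have $j_1\neq j_2$, $k_1\neq k_2$, and $p_{j_1,k_2}=p_{j_2,k_1}=*$. A $(K,F,Z,S)$ PDA yields an $F$-division coded caching scheme for $K$ users with memory ratio $M/N=Z/F$ and rate $R=S/F$. *)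

theory Defs
  imports Main
begin

text \<open>A (K,F,Z,S) placement delivery array: an F x K array P, where entry P j k
  (row j < F, column k < K) is None for the star symbol and Some s for the
  non-star symbol s, with s ranging over {1..S}.\<close>

definition is_PDA :: "nat \<Rightarrow> nat \<Rightarrow> nat \<Rightarrow> nat \<Rightarrow> (nat \<Rightarrow> nat \<Rightarrow> nat option) \<Rightarrow> bool" where
  "is_PDA K F Z S P \<longleftrightarrow>
     (\<forall>j<F. \<forall>k<K. \<forall>s. P j k = Some s \<longrightarrow> s \<in> {1..S}) \<and>
     (\<forall>k<K. card {j. j < F \<and> P j k = None} = Z) \<and>
     (\<forall>s\<in>{1..S}. \<exists>j<F. \<exists>k<K. P j k = Some s) \<and>
     (\<forall>j1<F. \<forall>k1<K. \<forall>j2<F. \<forall>k2<K. \<forall>s.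
        (j1, k1) \<noteq> (j2, k2) \<and> P j1 k1 = Some s \<and> P j2 k2 = Some s \<longrightarrow>
        j1 \<noteq> j2 \<and> k1 \<noteq> k2 \<and> P j1 k2 = None \<and> P j2 k1 = None)"

end

theory Submission
  imports Defs "HOL-Library.FuncSet"
begin

text \<open>Rows are the words f of length m over the alphabet {0..<q}. A column is a t-subset T of
  coordinates with a shift u i and a block index l i for each i in T; row f is non-starred there
  iff each cyclic difference f i - u i lies in the block {l i d + 1 .. l i d + d}, and these
  a blocks fit into {1..<q} because a d < q. Each column has d^t q^(m-t) non-starred rows. The
  symbol of a non-starred entry is f with its T-coordinates overwritten by u, together with the
  positions of the differences inside their blocks, transported from T to {..<t} by a fixed
  bijection so that the symbol forgets T. Two entries with equal symbols either have
  different T, and then f2 agrees with u1 at a coordinate of T1 - T2, giving difference 0 in no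
  block; or equal T, hence equal u, and then (the positions determining f) they differ in some
  block index, and the blocks are disjoint.
  Either way the cross entries are stars. With d = q - z and a = (q - 1) div d this is the
  array of the theorem.\<close>

section \<open>Cyclic differences\<close>

definition cyc_add :: "nat \<Rightarrow> nat \<Rightarrow> nat \<Rightarrow> nat" where
  "cyc_add q u w = (u + w) mod q"

definition cyc_diff :: "nat \<Rightarrow> nat \<Rightarrow> nat \<Rightarrow> nat" where
  "cyc_diff q x u = (x + q - u) mod q"

lemma cyc_diff_self [simp]: "cyc_diff q u u = 0"
  by (simp add: cyc_diff_def)

lemma cyc_diff_cyc_add: "u < q \<Longrightarrow> w < q \<Longrightarrow> cyc_diff q (cyc_add q u w) u = w"
  unfolding cyc_diff_def cyc_add_def by (cases "u + w < q") (simp_all add: mod_if)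

lemma cyc_add_cyc_diff: "u < q \<Longrightarrow> x < q \<Longrightarrow> cyc_add q u (cyc_diff q x u) = x"
  unfolding cyc_diff_def cyc_add_def by (simp add: mod_add_right_eq)

lemma bij_betw_cyc_diff:
  assumes "u < q"
  shows "bij_betw (\<lambda>x. cyc_diff q x u) {..<q} {..<q}"
proof (rule bij_betwI[where g = "cyc_add q u"])
  show "(\<lambda>x. cyc_diff q x u) \<in> {..<q} \<rightarrow> {..<q}" "cyc_add q u \<in> {..<q} \<rightarrow> {..<q}"
    using assms by (auto simp: cyc_diff_def cyc_add_def)
qed (use assms in \<open>simp_all add: cyc_diff_cyc_add cyc_add_cyc_diff\<close>)

lemma bij_betw_card_filter:
  assumes "bij_betw r A B"
  shows "card {x\<in>A. Q (r x)} = card {y\<in>B. Q y}"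
proof -
  have inj: "inj_on r {x\<in>A. Q (r x)}"
    using bij_betw_imp_inj_on[OF assms] by (rule inj_on_subset) auto
  have "r ` {x\<in>A. Q (r x)} = {y\<in>B. Q y}"
    using assms unfolding bij_betw_def by auto
  then show ?thesis using card_image[OF inj] by simp
qed

lemma card_cyc_diff_preimage:
  assumes "u < q" "B \<subseteq> {..<q}"
  shows "card {x\<in>{..<q}. cyc_diff q x u \<in> B} = card B"
proof -
  have "{y\<in>{..<q}. y \<in> B} = B" using assms(2) by auto
  then show ?thesis
    using bij_betw_card_filter[OF bij_betw_cyc_diff[OF assms(1)], of "\<lambda>y. y \<in> B"] by simp
qed

lemma block_index_unique:
  fixes l1 l2 d w :: nat
  assumes "w \<in> {l1 * d <.. l1 * d + d}" "w \<in> {l2 * d <.. l2 * d + d}"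
  shows "l1 = l2"
proof (rule ccontr)
  assume "l1 \<noteq> l2"
  then consider "Suc l1 \<le> l2" | "Suc l2 \<le> l1" by linarith
  then show False
  proof cases
    case 1
    then have "l1 * d + d \<le> l2 * d" using mult_le_mono1[OF 1, of d] by simp
    then show False using assms by simp
  next
    case 2
    then have "l2 * d + d \<le> l1 * d" using mult_le_mono1[OF 2, of d] by simp
    then show False using assms by simp
  qed
qed

section \<open>Placement delivery arrays indexed by finite sets\<close>

definition is_PDA_on ::
    "'r set \<Rightarrow> 'c set \<Rightarrow> 's set \<Rightarrow> nat \<Rightarrow> ('r \<Rightarrow> 'c \<Rightarrow> 's option) \<Rightarrow> bool" where
  "is_PDA_on Rs Cs Ss Z p \<longleftrightarrow>
     (\<forall>r\<in>Rs. \<forall>c\<in>Cs. \<forall>s. p r c = Some s \<longrightarrow> s \<in> Ss) \<and>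
     (\<forall>c\<in>Cs. card {r\<in>Rs. p r c = None} = Z) \<and>
     (\<forall>s\<in>Ss. \<exists>r\<in>Rs. \<exists>c\<in>Cs. p r c = Some s) \<and>
     (\<forall>r1\<in>Rs. \<forall>c1\<in>Cs. \<forall>r2\<in>Rs. \<forall>c2\<in>Cs. \<forall>s.
        (r1, c1) \<noteq> (r2, c2) \<and> p r1 c1 = Some s \<and> p r2 c2 = Some s \<longrightarrow>
        r1 \<noteq> r2 \<and> c1 \<noteq> c2 \<and> p r1 c2 = None \<and> p r2 c1 = None)"

lemma is_PDA_onD:
  assumes "is_PDA_on Rs Cs Ss Z p"
  shows is_PDA_on_symbol: "\<And>r c s. r \<in> Rs \<Longrightarrow> c \<in> Cs \<Longrightarrow> p r c = Some s \<Longrightarrow> s \<in> Ss"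
    and is_PDA_on_stars: "\<And>c. c \<in> Cs \<Longrightarrow> card {r\<in>Rs. p r c = None} = Z"
    and is_PDA_on_surj: "\<And>s. s \<in> Ss \<Longrightarrow> \<exists>r\<in>Rs. \<exists>c\<in>Cs. p r c = Some s"
    and is_PDA_on_cross: "\<And>r1 c1 r2 c2 s. r1 \<in> Rs \<Longrightarrow> c1 \<in> Cs \<Longrightarrow> r2 \<in> Rs \<Longrightarrow> c2 \<in> Cs \<Longrightarrow>
      (r1, c1) \<noteq> (r2, c2) \<Longrightarrow> p r1 c1 = Some s \<Longrightarrow> p r2 c2 = Some s \<Longrightarrow>
      r1 \<noteq> r2 \<and> c1 \<noteq> c2 \<and> p r1 c2 = None \<and> p r2 c1 = None"
  using assms unfolding is_PDA_on_def by blast+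

lemma is_PDA_on_imp_is_PDA:
  assumes fin: "finite Rs" "finite Cs" "finite Ss" and pda: "is_PDA_on Rs Cs Ss Z p"
  shows "\<exists>P. is_PDA (card Cs) (card Rs) Z (card Ss) P"
proof -
  obtain \<rho> where \<rho>: "bij_betw \<rho> {..<card Rs} Rs"
    using ex_bij_betw_nat_finite[OF fin(1)] by (auto simp: atLeast0LessThan)
  obtain \<kappa> where \<kappa>: "bij_betw \<kappa> {..<card Cs} Cs"
    using ex_bij_betw_nat_finite[OF fin(2)] by (auto simp: atLeast0LessThan)
  obtain \<sigma> where \<sigma>: "bij_betw \<sigma> Ss {1..card Ss}"
    using finite_same_card_bij[OF fin(3)] by force
  have \<rho>_in: "\<rho> j \<in> Rs" if "j < card Rs" for j using \<rho> that by (auto dest: bij_betw_apply)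
  have \<kappa>_in: "\<kappa> k \<in> Cs" if "k < card Cs" for k using \<kappa> that by (auto dest: bij_betw_apply)
  define P where "P j k = map_option \<sigma> (p (\<rho> j) (\<kappa> k))" for j k
  show ?thesis
    unfolding is_PDA_def
  proof (intro exI[of _ P] conjI allI impI ballI)
    fix j k s assume jk: "j < card Rs" "k < card Cs" and "P j k = Some s"
    then obtain s' where s': "p (\<rho> j) (\<kappa> k) = Some s'" "s = \<sigma> s'" by (auto simp: P_def)
    have "s' \<in> Ss" by (rule is_PDA_on_symbol[OF pda \<rho>_in[OF jk(1)] \<kappa>_in[OF jk(2)] s'(1)])
    then show "s \<in> {1..card Ss}" using bij_betw_apply[OF \<sigma>] s'(2) by simp
  next
    fix k assume "k < card Cs"
    have "card {j. j < card Rs \<and> P j k = None} = card {j\<in>{..<card Rs}. p (\<rho> j) (\<kappa> k) = None}"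
      by (simp add: P_def)
    also have "\<dots> = card {r\<in>Rs. p r (\<kappa> k) = None}"
      by (rule bij_betw_card_filter[OF \<rho>])
    also have "\<dots> = Z"
      by (rule is_PDA_on_stars[OF pda \<kappa>_in[OF \<open>k < card Cs\<close>]])
    finally show "card {j. j < card Rs \<and> P j k = None} = Z" .
  next
    fix s assume "s \<in> {1..card Ss}"
    then have "s \<in> \<sigma> ` Ss" using \<sigma> by (simp add: bij_betw_def)
    then obtain s' where "s' \<in> Ss" "\<sigma> s' = s" by blast
    then obtain r c where "r \<in> Rs" "c \<in> Cs" "p r c = Some s'"
      using is_PDA_on_surj[OF pda] by blast
    moreover have "r \<in> \<rho> ` {..<card Rs}" "c \<in> \<kappa> ` {..<card Cs}"
      using \<rho> \<kappa> \<open>r \<in> Rs\<close> \<open>c \<in> Cs\<close> by (simp_all add: bij_betw_def)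
    then obtain j k where "j < card Rs" "\<rho> j = r" "k < card Cs" "\<kappa> k = c" by blast
    ultimately show "\<exists>j<card Rs. \<exists>k<card Cs. P j k = Some s"
      using \<open>\<sigma> s' = s\<close> by (auto simp: P_def)
  next
    fix j1 k1 j2 k2 s
    assume j: "j1 < card Rs" "j2 < card Rs" and k: "k1 < card Cs" "k2 < card Cs"
      and H: "(j1, k1) \<noteq> (j2, k2) \<and> P j1 k1 = Some s \<and> P j2 k2 = Some s"
    obtain s1 s2 where s1: "p (\<rho> j1) (\<kappa> k1) = Some s1" and s2: "p (\<rho> j2) (\<kappa> k2) = Some s2"
      and "\<sigma> s1 = \<sigma> s2"
      using H by (auto simp: P_def)
    have "s1 \<in> Ss" "s2 \<in> Ss"
      using is_PDA_on_symbol[OF pda] \<rho>_in \<kappa>_in j k s1 s2 by blast+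
    then have "s1 = s2" using inj_onD[OF bij_betw_imp_inj_on[OF \<sigma>] \<open>\<sigma> s1 = \<sigma> s2\<close>] by simp
    have "(\<rho> j1, \<kappa> k1) \<noteq> (\<rho> j2, \<kappa> k2)"
    proof
      assume "(\<rho> j1, \<kappa> k1) = (\<rho> j2, \<kappa> k2)"
      then have "\<rho> j1 = \<rho> j2" "\<kappa> k1 = \<kappa> k2" by simp_all
      then have "j1 = j2" "k1 = k2"
        using inj_onD[OF bij_betw_imp_inj_on[OF \<rho>]] inj_onD[OF bij_betw_imp_inj_on[OF \<kappa>]] j k
        by simp_all
      with H show False by simp
    qed
    then have "\<rho> j1 \<noteq> \<rho> j2 \<and> \<kappa> k1 \<noteq> \<kappa> k2 \<and> p (\<rho> j1) (\<kappa> k2) = None \<and> p (\<rho> j2) (\<kappa> k1) = None"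
      using s1 s2 \<open>s1 = s2\<close> \<rho>_in \<kappa>_in j k by (intro is_PDA_on_cross[OF pda]) simp_all
    then show "j1 \<noteq> j2" "k1 \<noteq> k2" "P j1 k2 = None" "P j2 k1 = None"
      by (auto simp: P_def)
  qed
qed

section \<open>The block construction\<close>

locale pda_construction =
  fixes q d a m t :: nat and \<beta> :: "nat set \<Rightarrow> (nat \<Rightarrow> nat) \<Rightarrow> nat \<Rightarrow> nat"
  assumes a_pos: "0 < a" and blocks_fit: "a * d < q" and t_le_m: "t \<le> m"
    and bij_\<beta>: "\<And>T. T \<subseteq> {..<m} \<Longrightarrow> card T = t \<Longrightarrow>
                   bij_betw (\<beta> T) (T \<rightarrow>\<^sub>E {..<d}) ({..<t} \<rightarrow>\<^sub>E {..<d})"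
begin

definition rows :: "(nat \<Rightarrow> nat) set" where
  "rows = {..<m} \<rightarrow>\<^sub>E {..<q}"

definition cols :: "(nat set \<times> (nat \<Rightarrow> nat) \<times> (nat \<Rightarrow> nat)) set" where
  "cols = (SIGMA T:{T. T \<subseteq> {..<m} \<and> card T = t}. (T \<rightarrow>\<^sub>E {..<q}) \<times> (T \<rightarrow>\<^sub>E {..<a}))"

definition syms :: "((nat \<Rightarrow> nat) \<times> (nat \<Rightarrow> nat)) set" where
  "syms = rows \<times> ({..<t} \<rightarrow>\<^sub>E {..<d})"

definition in_blocks :: "(nat \<Rightarrow> nat) \<Rightarrow> nat set \<times> (nat \<Rightarrow> nat) \<times> (nat \<Rightarrow> nat) \<Rightarrow> bool" where
  "in_blocks f c \<longleftrightarrow> (case c of (T, u, l) \<Rightarrow>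
     \<forall>i\<in>T. cyc_diff q (f i) (u i) \<in> {l i * d <.. l i * d + d})"

definition overwrite :: "(nat \<Rightarrow> nat) \<Rightarrow> nat set \<times> (nat \<Rightarrow> nat) \<times> (nat \<Rightarrow> nat) \<Rightarrow> nat \<Rightarrow> nat" where
  "overwrite f c = (case c of (T, u, l) \<Rightarrow> \<lambda>i\<in>{..<m}. if i \<in> T then u i else f i)"

definition block_pos :: "(nat \<Rightarrow> nat) \<Rightarrow> nat set \<times> (nat \<Rightarrow> nat) \<times> (nat \<Rightarrow> nat) \<Rightarrow> nat \<Rightarrow> nat" where
  "block_pos f c = (case c of (T, u, l) \<Rightarrow> \<lambda>i\<in>T. cyc_diff q (f i) (u i) - l i * d - 1)"

definition entry ::
    "(nat \<Rightarrow> nat) \<Rightarrow> nat set \<times> (nat \<Rightarrow> nat) \<times> (nat \<Rightarrow> nat) \<Rightarrow> ((nat \<Rightarrow> nat) \<times> (nat \<Rightarrow> nat)) option"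
  where "entry f c = (if in_blocks f c then Some (overwrite f c, \<beta> (fst c) (block_pos f c)) else None)"

lemma d_lt_q: "d < q"
proof -
  have "d \<le> a * d" using a_pos by simp
  with blocks_fit show ?thesis by linarith
qed

lemma mem_cols:
  "(T, u, l) \<in> cols \<longleftrightarrow>
     T \<subseteq> {..<m} \<and> card T = t \<and> u \<in> T \<rightarrow>\<^sub>E {..<q} \<and> l \<in> T \<rightarrow>\<^sub>E {..<a}"
  by (simp add: cols_def)

lemma finite_subsets_of_card: "finite {T. T \<subseteq> {..<m} \<and> card T = t}"
  by (rule finite_subset[of _ "Pow {..<m}"]) auto

lemma finite_cols: "finite cols"
  unfolding cols_def using finite_subsets_of_card
  by (intro finite_SigmaI finite_cartesian_product finite_PiE)
    (auto intro: finite_subset[OF _ finite_lessThan])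

lemma card_cols: "card cols = (m choose t) * q ^ t * a ^ t"
proof -
  have "card cols = (\<Sum>T\<in>{T. T \<subseteq> {..<m} \<and> card T = t}.
      card ((T \<rightarrow>\<^sub>E {..<q}) \<times> (T \<rightarrow>\<^sub>E {..<a})))"
    unfolding cols_def using finite_cols finite_subsets_of_card
    by (intro card_SigmaI) (auto intro!: finite_PiE intro: finite_subset[OF _ finite_lessThan])
  also have "\<dots> = (\<Sum>T\<in>{T. T \<subseteq> {..<m} \<and> card T = t}. q ^ t * a ^ t)"
  proof (intro sum.cong refl)
    fix T assume "T \<in> {T. T \<subseteq> {..<m} \<and> card T = t}"
    then have "finite T" "card T = t" using finite_subset by auto
    then show "card ((T \<rightarrow>\<^sub>E {..<q}) \<times> (T \<rightarrow>\<^sub>E {..<a})) = q ^ t * a ^ t"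
      by (simp add: card_cartesian_product card_PiE)
  qed
  also have "\<dots> = (m choose t) * q ^ t * a ^ t"
    using n_subsets[of "{..<m}" t] by simp
  finally show ?thesis .
qed

lemma finite_rows: "finite rows" and card_rows: "card rows = q ^ m"
  by (simp_all add: rows_def finite_PiE card_PiE)

lemma finite_syms: "finite syms"
  by (simp add: syms_def finite_rows finite_PiE)

lemma card_syms: "card syms = d ^ t * q ^ m"
  by (simp add: syms_def rows_def card_cartesian_product card_PiE)

lemma card_in_blocks:
  assumes "(T, u, l) \<in> cols"
  shows "card {f\<in>rows. in_blocks f (T, u, l)} = d ^ t * q ^ (m - t)"
proof -
  have T: "T \<subseteq> {..<m}" "card T = t" using assms by (auto simp: mem_cols)
  define B where "B i = (if i \<in> T then {x\<in>{..<q}. cyc_diff q x (u i) \<in> {l i * d <.. l i * d + d}}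
    else {..<q})" for i
  have "{f\<in>rows. in_blocks f (T, u, l)} = PiE {..<m} B"
    using T(1) unfolding rows_def in_blocks_def B_def by (auto simp: PiE_def Pi_def split: if_splits)
  moreover have "card (B i) = (if i \<in> T then d else q)" for i
  proof (cases "i \<in> T")
    case True
    then have "u i < q" "Suc (l i) \<le> a" using assms by (auto simp: mem_cols PiE_iff)
    then have "l i * d + d < q" using mult_le_mono1[of "Suc (l i)" a d] blocks_fit by simp
    have "card (B i) = card {l i * d <.. l i * d + d}"
      unfolding B_def if_P[OF True]
      by (rule card_cyc_diff_preimage) (use \<open>u i < q\<close> \<open>l i * d + d < q\<close> in auto)
    then show ?thesis using True by simp
  qed (simp add: B_def)
  ultimately have "card {f\<in>rows. in_blocks f (T, u, l)} = (\<Prod>i<m. if i \<in> T then d else q)"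
    by (simp add: card_PiE)
  also have "\<dots> = d ^ card T * q ^ card ({..<m} - T)"
    using T(1) by (simp add: prod.If_cases Int_absorb1 Diff_eq[symmetric])
  finally show ?thesis using T finite_subset[OF T(1)] by (simp add: card_Diff_subset)
qed

lemma overwrite_in_rows: "f \<in> rows \<Longrightarrow> (T, u, l) \<in> cols \<Longrightarrow> overwrite f (T, u, l) \<in> rows"
  by (auto simp: rows_def overwrite_def mem_cols PiE_iff)

lemma block_pos_mem: "in_blocks f (T, u, l) \<Longrightarrow> block_pos f (T, u, l) \<in> T \<rightarrow>\<^sub>E {..<d}"
  by (fastforce simp: in_blocks_def block_pos_def)

lemma entry_in_syms:
  assumes "f \<in> rows" "c \<in> cols" "entry f c = Some s"
  shows "s \<in> syms"
proof -
  obtain T u l where c: "c = (T, u, l)" by (cases c)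
  with assms(2) have T: "T \<subseteq> {..<m}" "card T = t" by (auto simp: mem_cols)
  from c assms(3) have blocks: "in_blocks f (T, u, l)"
    and s: "s = (overwrite f c, \<beta> T (block_pos f c))"
    by (auto simp: entry_def split: if_splits)
  have "\<beta> T (block_pos f c) \<in> {..<t} \<rightarrow>\<^sub>E {..<d}"
    using bij_betw_apply[OF bij_\<beta>[OF T] block_pos_mem[OF blocks]] c by simp
  then show ?thesis using s overwrite_in_rows assms(1,2) c by (simp add: syms_def)
qed

lemma entry_surj:
  assumes "s \<in> syms"
  shows "\<exists>f\<in>rows. \<exists>c\<in>cols. entry f c = Some s"
proof -
  obtain v e where s: "s = (v, e)" and v: "v \<in> rows" and e: "e \<in> {..<t} \<rightarrow>\<^sub>E {..<d}"
    using assms unfolding syms_def by auto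
  have v_lt: "v i < q" if "i < m" for i using v that by (auto simp: rows_def)
  define T where "T = {..<t}"
  have \<beta>T: "bij_betw (\<beta> T) (T \<rightarrow>\<^sub>E {..<d}) ({..<t} \<rightarrow>\<^sub>E {..<d})"
    using t_le_m by (intro bij_\<beta>) (auto simp: T_def)
  define e' where "e' = inv_into (T \<rightarrow>\<^sub>E {..<d}) (\<beta> T) e"
  have e': "e' \<in> T \<rightarrow>\<^sub>E {..<d}" "\<beta> T e' = e"
    using bij_betw_inv_into_right[OF \<beta>T e] bij_betw_apply[OF bij_betw_inv_into[OF \<beta>T] e]
    by (simp_all add: e'_def)
  have e'_lt: "e' i + 1 < q" if "i \<in> T" for i
    using e'(1) that d_lt_q by (auto simp: PiE_iff)
  define c where "c = (T, restrict v T, \<lambda>i\<in>T. 0::nat)"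
  define f where "f = (\<lambda>i\<in>{..<m}. if i \<in> T then cyc_add q (v i) (e' i + 1) else v i)"
  have diff: "cyc_diff q (f i) (v i) = e' i + 1" if "i \<in> T" for i
    using that t_le_m cyc_diff_cyc_add[OF v_lt e'_lt] by (auto simp: f_def T_def)
  have c_in: "c \<in> cols" using t_le_m a_pos v_lt by (auto simp: c_def T_def mem_cols)
  have f_in: "f \<in> rows"
    using v_lt d_lt_q t_le_m by (auto simp: f_def rows_def cyc_add_def T_def)
  have "in_blocks f c"
    using e'(1) by (auto simp: in_blocks_def c_def diff PiE_iff)
  moreover have "overwrite f c = v"
  proof
    fix i show "overwrite f c i = v i"
      using PiE_arb[OF v[unfolded rows_def], of i] by (simp add: overwrite_def c_def f_def)
  qed
  moreover have "block_pos f c = e'"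
  proof
    fix i show "block_pos f c i = e' i"
      using PiE_arb[OF e'(1), of i] by (simp add: block_pos_def c_def diff)
  qed
  ultimately have "entry f c = Some s" using e'(2) s by (simp add: entry_def c_def)
  with c_in f_in show ?thesis by blast
qed

lemma overwrite_eqD:
  assumes "overwrite f1 (T1, u1, l1) = overwrite f2 (T2, u2, l2)" "i < m"
  shows "(if i \<in> T1 then u1 i else f1 i) = (if i \<in> T2 then u2 i else f2 i)"
  using fun_cong[OF assms(1), of i] assms(2) by (simp add: overwrite_def)

lemma not_in_blocks_if_overwrite_eq:
  assumes "overwrite f1 (T1, u1, l1) = overwrite f2 (T2, u2, l2)" "T1 \<subseteq> {..<m}"
    and "i \<in> T1" "i \<notin> T2"
  shows "\<not> in_blocks f2 (T1, u1, l1)"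
proof -
  have "u1 i = f2 i" using overwrite_eqD[OF assms(1), of i] assms(2-4) by auto
  then have "cyc_diff q (f2 i) (u1 i) \<notin> {l1 i * d <.. l1 i * d + d}" by simp
  then show ?thesis using assms(3) by (auto simp: in_blocks_def)
qed

lemma in_blocks_block_index_unique:
  assumes "in_blocks f (T, u, l1)" "in_blocks f (T, u, l2)" "i \<in> T"
  shows "l1 i = l2 i"
proof (rule block_index_unique)
  show "cyc_diff q (f i) (u i) \<in> {l1 i * d <.. l1 i * d + d}"
    and "cyc_diff q (f i) (u i) \<in> {l2 i * d <.. l2 i * d + d}"
    using assms by (simp_all add: in_blocks_def)
qed

lemma in_blocks_inj:
  assumes "f1 \<in> rows" "f2 \<in> rows" "(T, u, l) \<in> cols"
    and "in_blocks f1 (T, u, l)" "in_blocks f2 (T, u, l)"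
    and "overwrite f1 (T, u, l) = overwrite f2 (T, u, l)"
    and "block_pos f1 (T, u, l) = block_pos f2 (T, u, l)"
  shows "f1 = f2"
proof (rule PiE_ext)
  show "f1 \<in> {..<m} \<rightarrow>\<^sub>E {..<q}" "f2 \<in> {..<m} \<rightarrow>\<^sub>E {..<q}" using assms(1,2) by (simp_all add: rows_def)
  fix i assume "i \<in> {..<m}"
  show "f1 i = f2 i"
  proof (cases "i \<in> T")
    case True
    have "cyc_diff q (f1 i) (u i) - l i * d - 1 = cyc_diff q (f2 i) (u i) - l i * d - 1"
      using fun_cong[OF assms(7), of i] True by (simp add: block_pos_def)
    moreover have "l i * d < cyc_diff q (f1 i) (u i)" "l i * d < cyc_diff q (f2 i) (u i)"
      using assms(4,5) True by (auto simp: in_blocks_def)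
    ultimately have "cyc_diff q (f1 i) (u i) = cyc_diff q (f2 i) (u i)" by linarith
    moreover have "u i < q" "f1 i < q" "f2 i < q"
      using assms(1-3) True \<open>i \<in> {..<m}\<close> by (auto simp: rows_def mem_cols PiE_iff)
    ultimately show ?thesis by (metis cyc_add_cyc_diff)
  next
    case False
    then show ?thesis using overwrite_eqD[OF assms(6), of i] \<open>i \<in> {..<m}\<close> by simp
  qed
qed

lemma entry_same_symbol:
  assumes f: "f1 \<in> rows" "f2 \<in> rows" and c: "c1 \<in> cols" "c2 \<in> cols"
    and s: "entry f1 c1 = Some s" "entry f2 c2 = Some s" and ne: "(f1, c1) \<noteq> (f2, c2)"
  shows "\<not> in_blocks f1 c2 \<and> \<not> in_blocks f2 c1"
proof -
  obtain T1 u1 l1 T2 u2 l2 where c_eq: "c1 = (T1, u1, l1)" "c2 = (T2, u2, l2)"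
    by (metis prod_cases3)
  have T: "T1 \<subseteq> {..<m}" "T2 \<subseteq> {..<m}" "card T1 = t" "card T2 = t"
    using c c_eq by (auto simp: mem_cols)
  have in1: "in_blocks f1 (T1, u1, l1)" and in2: "in_blocks f2 (T2, u2, l2)"
    and ow: "overwrite f1 (T1, u1, l1) = overwrite f2 (T2, u2, l2)"
    and bp: "\<beta> T1 (block_pos f1 (T1, u1, l1)) = \<beta> T2 (block_pos f2 (T2, u2, l2))"
    using s c_eq by (auto simp: entry_def split: if_splits)
  show ?thesis
  proof (cases "T1 = T2")
    case False
    have "finite T1" "finite T2" using T finite_subset by auto
    then have "\<not> T1 \<subseteq> T2" "\<not> T2 \<subseteq> T1"
      using card_subset_eq[of T2 T1] card_subset_eq[of T1 T2] T False by auto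
    then obtain i i' where i: "i \<in> T1" "i \<notin> T2" and i': "i' \<in> T2" "i' \<notin> T1" by blast
    show ?thesis
      using not_in_blocks_if_overwrite_eq[OF ow T(1) i]
        not_in_blocks_if_overwrite_eq[OF ow[symmetric] T(2) i'] c_eq by simp
  next
    case True
    have "u1 = u2"
    proof (rule PiE_ext)
      show "u1 \<in> T1 \<rightarrow>\<^sub>E {..<q}" "u2 \<in> T1 \<rightarrow>\<^sub>E {..<q}" using c c_eq True by (auto simp: mem_cols)
      fix i assume "i \<in> T1"
      then show "u1 i = u2 i" using overwrite_eqD[OF ow, of i] T(1) True by auto
    qed
    show ?thesis
    proof (cases "l1 = l2")
      case True
      have "block_pos f1 (T1, u1, l1) = block_pos f2 (T2, u2, l2)"
        using inj_onD[OF bij_betw_imp_inj_on[OF bij_\<beta>[OF T(1,3)]]] bp \<open>T1 = T2\<close>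
          block_pos_mem[OF in1] block_pos_mem[OF in2] by simp
      then have "f1 = f2"
        using in_blocks_inj[OF f c(1)[unfolded c_eq] in1] in2 ow \<open>T1 = T2\<close> \<open>u1 = u2\<close> True
        by simp
      then show ?thesis using ne c_eq True \<open>T1 = T2\<close> \<open>u1 = u2\<close> by simp
    next
      case False
      have "\<exists>i\<in>T1. l1 i \<noteq> l2 i"
      proof (rule ccontr)
        assume "\<not> (\<exists>i\<in>T1. l1 i \<noteq> l2 i)"
        then have "l1 = l2"
          using c c_eq \<open>T1 = T2\<close> by (intro PiE_ext[of l1 T1 "\<lambda>_. {..<a}"]) (auto simp: mem_cols)
        with False show False ..
      qed
      then obtain i where i: "i \<in> T1" "l1 i \<noteq> l2 i" by blast
      have "\<not> in_blocks f1 (T1, u1, l2)"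
        using in_blocks_block_index_unique[OF in1 _ i(1)] i(2) by blast
      moreover have "\<not> in_blocks f2 (T1, u1, l1)"
        using in_blocks_block_index_unique[of f2 T1 u1 l1 l2 i] in2 \<open>T1 = T2\<close> \<open>u1 = u2\<close> i by blast
      ultimately show ?thesis using c_eq \<open>T1 = T2\<close> \<open>u1 = u2\<close> by simp
    qed
  qed
qed

lemma is_PDA_on_construction: "is_PDA_on rows cols syms (q ^ m - d ^ t * q ^ (m - t)) entry"
proof -
  have stars: "card {f\<in>rows. entry f c = None} = q ^ m - d ^ t * q ^ (m - t)" if "c \<in> cols" for c
  proof -
    obtain T u l where c: "c = (T, u, l)" by (metis prod_cases3)
    have "{f\<in>rows. entry f c = None} = rows - {f\<in>rows. in_blocks f c}"
      by (auto simp: entry_def)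
    then show ?thesis
      using card_in_blocks that c finite_rows card_rows by (simp add: card_Diff_subset)
  qed
  have cross: "f1 \<noteq> f2 \<and> c1 \<noteq> c2 \<and> entry f1 c2 = None \<and> entry f2 c1 = None"
    if "f1 \<in> rows" "c1 \<in> cols" "f2 \<in> rows" "c2 \<in> cols" "(f1, c1) \<noteq> (f2, c2)"
      "entry f1 c1 = Some s" "entry f2 c2 = Some s" for f1 c1 f2 c2 s
  proof -
    have "\<not> in_blocks f1 c2 \<and> \<not> in_blocks f2 c1" using that by (intro entry_same_symbol)
    moreover have "in_blocks f1 c1" "in_blocks f2 c2"
      using that(6,7) by (auto simp: entry_def split: if_splits)
    ultimately show ?thesis by (auto simp: entry_def)
  qed
  show ?thesis
    unfolding is_PDA_on_def
  proof (intro conjI)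
    show "\<forall>f\<in>rows. \<forall>c\<in>cols. \<forall>s. entry f c = Some s \<longrightarrow> s \<in> syms"
      using entry_in_syms by blast
    show "\<forall>c\<in>cols. card {f\<in>rows. entry f c = None} = q ^ m - d ^ t * q ^ (m - t)"
      using stars by blast
    show "\<forall>s\<in>syms. \<exists>f\<in>rows. \<exists>c\<in>cols. entry f c = Some s"
      using entry_surj by blast
    show "\<forall>f1\<in>rows. \<forall>c1\<in>cols. \<forall>f2\<in>rows. \<forall>c2\<in>cols. \<forall>s.
        (f1, c1) \<noteq> (f2, c2) \<and> entry f1 c1 = Some s \<and> entry f2 c2 = Some s \<longrightarrow>
        f1 \<noteq> f2 \<and> c1 \<noteq> c2 \<and> entry f1 c2 = None \<and> entry f2 c1 = None"
      using cross by blast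
  qed
qed
end

theorem exists_PDA_block_construction:
  fixes q d a m t :: nat
  assumes "0 < a" "a * d < q" "t \<le> m"
  shows "\<exists>P. is_PDA ((m choose t) * q ^ t * a ^ t) (q ^ m) (q ^ m - d ^ t * q ^ (m - t))
                     (d ^ t * q ^ m) P"
proof -
  have "\<exists>h. bij_betw h (T \<rightarrow>\<^sub>E {..<d}) ({..<t} \<rightarrow>\<^sub>E {..<d})"
    if "T \<subseteq> {..<m}" "card T = t" for T
    using that finite_subset[OF that(1)]
    by (intro finite_same_card_bij) (simp_all add: finite_PiE card_PiE)
  then obtain \<beta> where "\<And>T. T \<subseteq> {..<m} \<Longrightarrow> card T = t \<Longrightarrow>
      bij_betw (\<beta> T) (T \<rightarrow>\<^sub>E {..<d}) ({..<t} \<rightarrow>\<^sub>E {..<d})"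
    by metis
  with assms interpret pda_construction q d a m t \<beta> by unfold_locales
  have "\<exists>P. is_PDA (card cols) (card rows) (q ^ m - d ^ t * q ^ (m - t)) (card syms) P"
    by (rule is_PDA_on_imp_is_PDA[OF finite_rows finite_cols finite_syms is_PDA_on_construction])
  then show ?thesis using card_cols card_syms card_rows by simp
qed

theorem theorem4:
  fixes q z m t :: nat
  assumes "q \<ge> 2" "0 < z" "z < q" "0 < t" "t < m"
  shows "\<exists>P. is_PDA ((m choose t) * q ^ t * ((q - 1) div (q - z)) ^ t)
                     (q ^ m)
                     (q ^ m - (q - z) ^ t * q ^ (m - t))
                     ((q - z) ^ t * q ^ m) P"
proof (rule exists_PDA_block_construction)
  show "t \<le> m" using assms by simp
  show "0 < (q - 1) div (q - z)" using assms by (simp add: div_greater_zero_iff)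
  have "(q - 1) div (q - z) * (q - z) \<le> q - 1" by (rule div_times_less_eq_dividend)
  then show "(q - 1) div (q - z) * (q - z) < q" using assms(1) by linarith
qed

end
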